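(* Let $\lambda\in\mathbb{R}\setminus\{0\}$, $k\in\mathbb{Z}$, $u\in\mathbb{C}$ with $u\neq1$, and $x,y\in\mathbb{R}$. Then for every integer $n\ge0$, \[ 2\Big\{\sum_{l=0}^{n}\binom{n}{l}(1)_{n-l,\lambda}FG_{l,\lambda}^{[k,c]}(x,y;u)-u\,FG_{n,\lambda}^{[k,c]}(x,y;u)\Big\} =(1-u)\,n\sum_{m=0}^{n-1}\frac{\binom{n-1}{m}}{m+1}\sum_{j=1}^{m+1}\frac{(1)_{j,\lambda}}{j^{k-1}}S_{1,\lambda}(m+1,j)\sum_{l=0}^{n-1-m}\binom{n-1-m}{l}(x)_{n-1-m-l,\lambda}\big((iy)_{l,\lambda}+(-iy)_{l,\lambda}\big) \] and \[ 2i\Big\{\sum_{l=0}^{n}\binom{n}{l}(1)_{n-l,\lambda}FG_{l,\lambda}^{[k,s]}(x,y;u)-u\,FG_{n,\lambda}^{[k,s]}(x,y;u)\Big\} =(1-u)\,n\sum_{m=0}^{n-1}\frac{\binom{n-1}{m}}{m+1}\sum_{j=1}^{m+1}\frac{(1)_{j,\lambda}}{j^{k-1}}S_{1,\lambda}(m+1,j)\sum_{l=0}^{n-1-m}\binom{n-1-m}{l}(x)_{n-1-m-l,\lambda}\big((iy)_{l,\lambda}-(-iy)_{l,\lambda}\big). \]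
   Context: All generating functions are formal power series in $t$. For $z\in\mathbb{C}$: $(z)_{0,\lambda}=1$ and $(z)_{n,\lambda}=z(z-\lambda)\cdots(z-(n-1)\lambda)$ for $n\ge1$. The degenerate exponential is $e_\lambda^{z}(t)=\sum_{n\ge0}(z)_{n,\lambda}\frac{t^n}{n!}$ (i.e. $(1+\lambda t)^{z/\lambda}$), and $e_\lambda(t)=e_\lambda^{1}(t)$. Also $\log_\lambda(1+t)=\frac{1}{\lambda}\big((1+t)^\lambda-1\big)$. The degenerate Stirling numbers of the first kind are defined by $\frac{1}{j!}(\log_\lambda(1+t))^j=\sum_{n\ge j}S_{1,\lambda}(n,j)\frac{t^n}{n!}$. The modified degenerate polyexponential function is $\mathrm{Ei}_{k,\lambda}(x)=\sum_{n\ge1}\frac{(1)_{n,\lambda}}{n^k(n-1)!}x^n$. The degenerate cosine and sine are $\cos_\lambda^{(y)}(t)=\frac{e_\lambda^{iy}(t)+e_\lambda^{-iy}(t)}{2}$ and $\sin_\lambda^{(y)}(t)=\frac{e_\lambda^{iy}(t)-e_\lambda^{-iy}(t)}{2i}$. The cosine and sine degenerate poly-Frobenius-Genocchi polynomials are defined by $\sum_{n\ge0}FG_{n,\lambda}^{[k,c]}(x,y;u)\frac{t^n}{n!}=\frac{(1-u)\mathrm{Ei}_{k,\lambda}(\log_\lambda(1+t))}{e_\lambda(t)-u}e_\lambda^{x}(t)\cos_\lambda^{(y)}(t)$ and $\sum_{n\ge0}FG_{n,\lambda}^{[k,s]}(x,y;u)\frac{t^n}{n!}=\frac{(1-u)\mathrm{Ei}_{k,\lambda}(\log_\lambda(1+t))}{e_\lambda(t)-u}e_\lambda^{x}(t)\sin_\lambda^{(y)}(t)$.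 *)

theory Defs
  imports Complex_Main "HOL-Computational_Algebra.Formal_Power_Series"
begin

definition dfall :: "complex \<Rightarrow> nat \<Rightarrow> real \<Rightarrow> complex" where
  "dfall z n lam = (\<Prod>i<n. z - of_nat i * of_real lam)"

definition dexp :: "real \<Rightarrow> complex \<Rightarrow> complex fps" where
  "dexp lam z = Abs_fps (\<lambda>n. dfall z n lam / fact n)"

definition dlog :: "real \<Rightarrow> complex fps" where
  "dlog lam = fps_const (1 / of_real lam) * (fps_binomial (of_real lam) - 1)"

definition S1 :: "real \<Rightarrow> nat \<Rightarrow> nat \<Rightarrow> complex" where
  "S1 lam n j = fact n * fps_nth (fps_const (1 / fact j) * dlog lam ^ j) n"

definition Ei_fps :: "int \<Rightarrow> real \<Rightarrow> complex fps" where
  "Ei_fps k lam = Abs_fps (\<lambda>n. if n = 0 then 0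
      else dfall 1 n lam / ((of_nat n) powi k * fact (n - 1)))"

definition dcos :: "real \<Rightarrow> complex \<Rightarrow> complex fps" where
  "dcos lam y = fps_const (1/2) * (dexp lam (\<i> * y) + dexp lam (- (\<i> * y)))"

definition dsin :: "real \<Rightarrow> complex \<Rightarrow> complex fps" where
  "dsin lam y = fps_const (1 / (2 * \<i>)) * (dexp lam (\<i> * y) - dexp lam (- (\<i> * y)))"

definition FGc_gf :: "int \<Rightarrow> real \<Rightarrow> real \<Rightarrow> real \<Rightarrow> complex \<Rightarrow> complex fps" where
  "FGc_gf k lam x y u =
     fps_const (1 - u) * (Ei_fps k lam oo dlog lam) / (dexp lam 1 - fps_const u)
       * dexp lam (of_real x) * dcos lam (of_real y)"

definition FGs_gf :: "int \<Rightarrow> real \<Rightarrow> real \<Rightarrow> real \<Rightarrow> complex \<Rightarrow> complex fps" where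
  "FGs_gf k lam x y u =
     fps_const (1 - u) * (Ei_fps k lam oo dlog lam) / (dexp lam 1 - fps_const u)
       * dexp lam (of_real x) * dsin lam (of_real y)"

definition FGc :: "nat \<Rightarrow> int \<Rightarrow> real \<Rightarrow> real \<Rightarrow> real \<Rightarrow> complex \<Rightarrow> complex" where
  "FGc n k lam x y u = fact n * fps_nth (FGc_gf k lam x y u) n"

definition FGs :: "nat \<Rightarrow> int \<Rightarrow> real \<Rightarrow> real \<Rightarrow> real \<Rightarrow> complex \<Rightarrow> complex" where
  "FGs n k lam x y u = fact n * fps_nth (FGs_gf k lam x y u) n"

end

(* Multiplying the generating function by its denominator e_lambda(t) - u leaves
   (1 - u) Ei_{k,lambda}(log_lambda(1+t)) e_lambda^x(t) times 2 cos (resp. 2i sin), a sum of two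
   degenerate exponentials. Now compare n!-scaled coefficients. On the left, multiplication by
   e_lambda(t) is the binomial convolution with (1)_{n-l,lambda}. On the right, the coefficients of
   Ei_{k,lambda}(log_lambda(1+t)) are the inner Stirling sums (via j/j^k = 1/j^(k-1)); since this
   series has no constant term, binom(n, m+1) = n/(m+1) binom(n-1, m) shifts the convolution index. *)
theory Submission
  imports Defs
begin

unbundle fps_syntax

lemma fact_fps_mult_nth:
  fixes f g :: "'a::{comm_semiring_1,semiring_char_0} fps"
  shows "fact n * (f * g) $ n =
    (\<Sum>l=0..n. of_nat (n choose l) * (fact l * f $ l) * (fact (n - l) * g $ (n - l)))"
proof -
  have "fact n * (f$l * g$(n-l)) = of_nat (n choose l) * (fact l * f$l) * (fact (n-l) * g$(n-l))"
    if "l \<le> n" for l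
  proof -
    have "(fact n :: 'a) = of_nat (fact l * fact (n - l) * (n choose l))"
      using that by (simp only: binomial_fact_lemma of_nat_fact)
    then show ?thesis by (simp add: of_nat_fact algebra_simps)
  qed
  then show ?thesis by (simp add: fps_mult_nth sum_distrib_left)
qed

lemma fact_dexp_nth [simp]: "fact n * dexp lam z $ n = dfall z n lam"
  by (simp add: dexp_def)

lemma fact_mult_dexp_nth:
  "fact n * (g * dexp lam z) $ n =
    (\<Sum>l=0..n. of_nat (n choose l) * dfall z (n - l) lam * (fact l * g $ l))"
  unfolding fact_fps_mult_nth by (simp add: ac_simps)

lemma fact_dexp_minus_const_mult_nth:
  "fact n * ((dexp lam 1 - fps_const u) * F) $ n =
    (\<Sum>l=0..n. of_nat (n choose l) * dfall 1 (n - l) lam * (fact l * F $ l)) - u * (fact n * F $ n)"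
proof -
  have "(dexp lam 1 - fps_const u) * F = F * dexp lam 1 - fps_const u * F"
    by (simp add: algebra_simps)
  then show ?thesis by (simp add: fact_mult_dexp_nth right_diff_distrib mult.left_commute)
qed

lemma fact_Ei_compose_dlog_nth:
  "fact n * (Ei_fps k lam oo dlog lam) $ n =
     (\<Sum>j=1..n. dfall 1 j lam / (of_nat j powi (k - 1)) * S1 lam n j)"
proof -
  have "fact n * (Ei_fps k lam $ j * (dlog lam ^ j $ n)) =
      dfall 1 j lam / (of_nat j powi (k - 1)) * S1 lam n j" if "j \<ge> 1" for j
  proof -
    have "(fact j :: complex) = of_nat j * fact (j - 1)"
      using that by (simp add: fact_reduce)
    moreover have "(of_nat j :: complex) powi k = of_nat j powi (k - 1) * of_nat j"
      using power_int_minus_mult[of "of_nat j :: complex" k] that by simp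
    ultimately show ?thesis
      using that by (simp add: Ei_fps_def S1_def field_simps)
  qed
  then show ?thesis
    by (simp add: fps_compose_nth sum_distrib_left sum.atLeast_Suc_atMost Ei_fps_def)
qed

lemma binomial_convolution_shift:
  fixes a b :: "nat \<Rightarrow> 'a::field_char_0"
  assumes "a 0 = 0"
  shows "(\<Sum>i=0..n. of_nat (n choose i) * a i * b (n - i)) =
    of_nat n * (\<Sum>m<n. of_nat ((n - 1) choose m) / of_nat (m + 1) * a (m + 1) * b (n - 1 - m))"
proof (cases n)
  case (Suc n')
  have binomial: "of_nat (Suc n' choose Suc m) =
      of_nat (Suc n') * (of_nat (n' choose m) / of_nat (Suc m) :: 'a)" for m
  proof -
    have "of_nat (Suc m) * of_nat (Suc n' choose Suc m) = (of_nat (Suc n') * of_nat (n' choose m) :: 'a)"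
      by (simp only: of_nat_mult[symmetric] Suc_times_binomial)
    then show ?thesis
      by (simp add: field_simps del: of_nat_Suc binomial_Suc_Suc)
  qed
  have "(\<Sum>i=0..n. of_nat (n choose i) * a i * b (n - i)) =
      (\<Sum>m\<le>n'. of_nat (Suc n' choose Suc m) * a (Suc m) * b (n' - m))"
    using assms by (simp only: Suc atLeast0AtMost sum.atMost_Suc_shift) simp
  also have "\<dots> = of_nat n * (\<Sum>m<n. of_nat ((n - 1) choose m) / of_nat (m + 1) * a (m + 1) * b (n - 1 - m))"
    unfolding binomial by (simp add: Suc lessThan_Suc_atMost sum_distrib_left mult.assoc)
  finally show ?thesis .
qed (simp add: assms)

lemma fact_denominator_times_FG_gf_nth:
  fixes G :: "complex fps"
  assumes "u \<noteq> 1"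
  shows "fact n * ((dexp lam 1 - fps_const u) *
      (fps_const (1 - u) * (Ei_fps k lam oo dlog lam) / (dexp lam 1 - fps_const u) * dexp lam z * G)) $ n =
    (1 - u) * of_nat n * (\<Sum>m<n. of_nat ((n - 1) choose m) / of_nat (m + 1) *
      (\<Sum>j=1..m+1. dfall 1 j lam / (of_nat j powi (k - 1)) * S1 lam (m + 1) j) *
      (\<Sum>l=0..n-1-m. of_nat ((n - 1 - m) choose l) * dfall z (n - 1 - m - l) lam * (fact l * G $ l)))"
proof -
  let ?D = "dexp lam 1 - fps_const u" and ?E = "Ei_fps k lam oo dlog lam"
  have "?D $ 0 \<noteq> 0"
    using assms by (simp add: dexp_def dfall_def)
  then have cancel: "?D * (fps_const (1 - u) * ?E / ?D) = fps_const (1 - u) * ?E"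
    by simp
  have "?D * (fps_const (1 - u) * ?E / ?D * dexp lam z * G) =
      ?D * (fps_const (1 - u) * ?E / ?D) * (G * dexp lam z)"
    by (simp only: mult.assoc mult.commute[of "dexp lam z" G])
  also have "\<dots> = fps_const (1 - u) * (?E * (G * dexp lam z))"
    unfolding cancel by (simp only: mult.assoc)
  finally have "fact n * (?D * (fps_const (1 - u) * ?E / ?D * dexp lam z * G)) $ n =
      (1 - u) * (fact n * (?E * (G * dexp lam z)) $ n)"
    by (simp only: fps_mult_left_const_nth mult.left_commute[of "fact n"])
  also have "fact n * (?E * (G * dexp lam z)) $ n =
      (\<Sum>i=0..n. of_nat (n choose i) * (fact i * ?E $ i) * (fact (n - i) * (G * dexp lam z) $ (n - i)))"
    by (rule fact_fps_mult_nth)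
  also have "\<dots> = of_nat n * (\<Sum>m<n. of_nat ((n - 1) choose m) / of_nat (m + 1) *
      (fact (m + 1) * ?E $ (m + 1)) * (fact (n - 1 - m) * (G * dexp lam z) $ (n - 1 - m)))"
    by (rule binomial_convolution_shift) (simp add: Ei_fps_def)
  finally show ?thesis
    by (simp only: fact_Ei_compose_dlog_nth fact_mult_dexp_nth mult.assoc)
qed

theorem theorem5:
  fixes lam x y :: real and k :: int and u :: complex and n :: nat
  assumes "lam \<noteq> 0" and "u \<noteq> 1"
  shows "(2 * ((\<Sum>l=0..n. of_nat (n choose l) * dfall 1 (n - l) lam * FGc l k lam x y u)
              - u * FGc n k lam x y u)
         = (1 - u) * of_nat n * (\<Sum>m<n. of_nat ((n - 1) choose m) / of_nat (m + 1) *
             (\<Sum>j=1..m+1. dfall 1 j lam / (of_nat j powi (k - 1)) * S1 lam (m + 1) j) *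
             (\<Sum>l=0..n-1-m. of_nat ((n - 1 - m) choose l) * dfall (of_real x) (n - 1 - m - l) lam *
                (dfall (\<i> * of_real y) l lam + dfall (- (\<i> * of_real y)) l lam)))) \<and>
        (2 * \<i> * ((\<Sum>l=0..n. of_nat (n choose l) * dfall 1 (n - l) lam * FGs l k lam x y u)
              - u * FGs n k lam x y u)
         = (1 - u) * of_nat n * (\<Sum>m<n. of_nat ((n - 1) choose m) / of_nat (m + 1) *
             (\<Sum>j=1..m+1. dfall 1 j lam / (of_nat j powi (k - 1)) * S1 lam (m + 1) j) *
             (\<Sum>l=0..n-1-m. of_nat ((n - 1 - m) choose l) * dfall (of_real x) (n - 1 - m - l) lam *
                (dfall (\<i> * of_real y) l lam - dfall (- (\<i> * of_real y)) l lam))))"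
proof -
  let ?P = "fps_const (1 - u) * (Ei_fps k lam oo dlog lam) / (dexp lam 1 - fps_const u) * dexp lam (of_real x)"
  let ?Ep = "dexp lam (\<i> * of_real y)" and ?Em = "dexp lam (- (\<i> * of_real y))"
  have cos: "fps_const 2 * FGc_gf k lam x y u = ?P * (?Ep + ?Em)"
    by (simp add: FGc_gf_def dcos_def ac_simps)
  have sin: "fps_const (2 * \<i>) * FGs_gf k lam x y u = ?P * (?Ep - ?Em)"
    by (simp add: FGs_gf_def dsin_def ac_simps)
  have "2 * ((\<Sum>l=0..n. of_nat (n choose l) * dfall 1 (n - l) lam * FGc l k lam x y u) - u * FGc n k lam x y u)
      = fact n * ((dexp lam 1 - fps_const u) * (fps_const 2 * FGc_gf k lam x y u)) $ n"
    unfolding fact_dexp_minus_const_mult_nth by (simp add: FGc_def sum_distrib_left ac_simps)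
  moreover have "2 * \<i> * ((\<Sum>l=0..n. of_nat (n choose l) * dfall 1 (n - l) lam * FGs l k lam x y u) - u * FGs n k lam x y u)
      = fact n * ((dexp lam 1 - fps_const u) * (fps_const (2 * \<i>) * FGs_gf k lam x y u)) $ n"
    unfolding fact_dexp_minus_const_mult_nth by (simp add: FGs_def sum_distrib_left right_diff_distrib ac_simps)
  ultimately show ?thesis
    unfolding cos sin fact_denominator_times_FG_gf_nth[OF assms(2)] by (simp add: ring_distribs)
qed

end
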